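(* For $n\ge5$, $s_n\ge 4\,s_{n-2}$.
   Context: $s_n$ is the number of simple permutations in $\mathcal A_n$. Here $\mathcal A_{n}$ is the set of permutations $w\in S_{n}$ (one-line notation $w_1\cdots w_n$) avoiding all six vincular patterns below, where $w$ contains - $\underline{32}\,\underline{41}$ if there are $i,j$ with $i+2\le j\le n-1$ and $w_{j+1}<w_{i+1}<w_i<w_j$; - $\underline{14}\,\underline{23}$ if there are such $i,j$ with $w_i<w_j<w_{j+1}<w_{i+1}$; - $\underline{41}\,\underline{32}$ if there are such $i,j$ with $w_{i+1}<w_{j+1}<w_j<w_i$; - $\underline{23}\,\underline{14}$ if there are such $i,j$ with $w_j<w_i<w_{i+1}<w_{j+1}$; - $\underline{23}\,\underline{1}$ if there is $i$ with $i+1\le n-1$ and $w_n<w_i<w_{i+1}$; - $\underline{1}\,\underline{32}$ if there is $j$ with $2\le j\le n-1$ and $w_1<w_{j+1}<w_j$. A permutation $\pi\in S_n$ is simple if there is no interval of positions $\{i,\dots,j\}$ with $2\le j-i+1\le n-1$ such that $\{\pi_i,\dots,\pi_j\}$ is a set of consecutive integers. *)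

theory Defs
  imports "HOL-Combinatorics.Permutations"
begin

text \<open>A permutation w in S_n is a function nat to nat that permutes the positions {1..n};
  w i is the i-th letter of the one-line notation w_1 ... w_n.\<close>

definition contains_3241 :: "nat \<Rightarrow> (nat \<Rightarrow> nat) \<Rightarrow> bool" where
  "contains_3241 n w \<longleftrightarrow> (\<exists>i j. 1 \<le> i \<and> i + 2 \<le> j \<and> j \<le> n - 1 \<and>
      w (j+1) < w (i+1) \<and> w (i+1) < w i \<and> w i < w j)"

definition contains_1423 :: "nat \<Rightarrow> (nat \<Rightarrow> nat) \<Rightarrow> bool" where
  "contains_1423 n w \<longleftrightarrow> (\<exists>i j. 1 \<le> i \<and> i + 2 \<le> j \<and> j \<le> n - 1 \<and>
      w i < w j \<and> w j < w (j+1) \<and> w (j+1) < w (i+1))"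

definition contains_4132 :: "nat \<Rightarrow> (nat \<Rightarrow> nat) \<Rightarrow> bool" where
  "contains_4132 n w \<longleftrightarrow> (\<exists>i j. 1 \<le> i \<and> i + 2 \<le> j \<and> j \<le> n - 1 \<and>
      w (i+1) < w (j+1) \<and> w (j+1) < w j \<and> w j < w i)"

definition contains_2314 :: "nat \<Rightarrow> (nat \<Rightarrow> nat) \<Rightarrow> bool" where
  "contains_2314 n w \<longleftrightarrow> (\<exists>i j. 1 \<le> i \<and> i + 2 \<le> j \<and> j \<le> n - 1 \<and>
      w j < w i \<and> w i < w (i+1) \<and> w (i+1) < w (j+1))"

definition contains_231 :: "nat \<Rightarrow> (nat \<Rightarrow> nat) \<Rightarrow> bool" where
  "contains_231 n w \<longleftrightarrow> (\<exists>i. 1 \<le> i \<and> i + 1 \<le> n - 1 \<and> w n < w i \<and> w i < w (i+1))"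

definition contains_132 :: "nat \<Rightarrow> (nat \<Rightarrow> nat) \<Rightarrow> bool" where
  "contains_132 n w \<longleftrightarrow> (\<exists>j. 2 \<le> j \<and> j \<le> n - 1 \<and> w 1 < w (j+1) \<and> w (j+1) < w j)"

definition A_set :: "nat \<Rightarrow> (nat \<Rightarrow> nat) set" where
  "A_set n = {w. w permutes {1..n} \<and> \<not> contains_3241 n w \<and> \<not> contains_1423 n w \<and>
      \<not> contains_4132 n w \<and> \<not> contains_2314 n w \<and> \<not> contains_231 n w \<and> \<not> contains_132 n w}"

definition simple_perm :: "nat \<Rightarrow> (nat \<Rightarrow> nat) \<Rightarrow> bool" where
  "simple_perm n w \<longleftrightarrow> \<not> (\<exists>i j. 1 \<le> i \<and> j \<le> n \<and> 2 \<le> j - i + 1 \<and> j - i + 1 \<le> n - 1 \<and>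
      (\<exists>a b. w ` {i..j} = {a..b}))"

definition s_seq :: "nat \<Rightarrow> nat" where
  "s_seq n = card {w \<in> A_set n. simple_perm n w}"

end

theory Submission
  imports Defs
begin

text \<open>
  A simple permutation never has two adjacent entries with consecutive values. Hence, in a simple
  w \<in> A_m with m \<ge> 3, the values 1 and 2 are not adjacent, and w can be expanded to a permutation
  of length m + 2 by replacing the entries 1 and 2 by one of the block pairs ([1,3],[2,4]),
  ([3,1],[4,2]), ([2],[3,1,4]), ([2],[4,1,3]) and raising every other entry by 2. Each of these
  four expansions stays simple and inside A, each is injective, and their images are disjoint
  because they differ in the adjacencies among the values 1..4. So s_(m+2) \<ge> 4 s_m.
\<close>

fun adjacent_pairs :: "'a list \<Rightarrow> ('a \<times> 'a) set" where
  "adjacent_pairs (x # y # zs) = insert (x, y) (adjacent_pairs (y # zs))"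
| "adjacent_pairs _ = {}"

lemma adjacent_pairs_eq_zip: "adjacent_pairs xs = set (zip xs (tl xs))"
  by (induction xs rule: adjacent_pairs.induct) auto

lemma adjacent_pairs_iff_nth:
  "(a, b) \<in> adjacent_pairs xs \<longleftrightarrow> (\<exists>k. Suc k < length xs \<and> xs ! k = a \<and> xs ! Suc k = b)"
  by (auto simp: adjacent_pairs_eq_zip in_set_zip nth_tl less_diff_conv)

lemma adjacent_pairs_append:
  "adjacent_pairs (xs @ ys) = adjacent_pairs xs \<union> adjacent_pairs ys \<union>
     (if xs \<noteq> [] \<and> ys \<noteq> [] then {(last xs, hd ys)} else {})"
proof (induction xs rule: adjacent_pairs.induct)
  case ("2_2" v)
  then show ?case by (cases ys) auto
qed auto

lemma adjacent_pairs_infix: "adjacent_pairs bs \<subseteq> adjacent_pairs (as @ bs @ cs)"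
  by (auto simp: adjacent_pairs_append)

lemma adjacent_pairs_concat_map:
  assumes "\<forall>x\<in>set xs. f x \<noteq> []"
  shows "adjacent_pairs (concat (map f xs)) =
    (\<Union>x\<in>set xs. adjacent_pairs (f x)) \<union> {(last (f x), hd (f y)) | x y. (x, y) \<in> adjacent_pairs xs}"
  using assms
proof (induction xs rule: adjacent_pairs.induct)
  case (1 x y zs)
  then have "concat (map f (y # zs)) \<noteq> []" "hd (concat (map f (y # zs))) = hd (f y)" by auto
  then have "adjacent_pairs (concat (map f (x # y # zs))) =
      adjacent_pairs (f x) \<union> adjacent_pairs (concat (map f (y # zs))) \<union> {(last (f x), hd (f y))}"
    using 1(2) by (simp add: adjacent_pairs_append)
  with 1 show ?case by auto
qed auto

lemma adjacent_pairs_in_set: "(a, b) \<in> adjacent_pairs xs \<Longrightarrow> a \<in> set xs \<and> b \<in> set xs"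
  by (induction xs rule: adjacent_pairs.induct) auto

lemma adjacent_pairs_distinct_neq: "distinct xs \<Longrightarrow> (a, b) \<in> adjacent_pairs xs \<Longrightarrow> a \<noteq> b"
  by (induction xs rule: adjacent_pairs.induct) (auto dest: adjacent_pairs_in_set)

lemma adjacent_pairs_middle_in_infix:
  assumes "distinct (as @ bs @ cs)"
    and "(p, v) \<in> adjacent_pairs (as @ bs @ cs)" "(v, s) \<in> adjacent_pairs (as @ bs @ cs)"
    and "p \<in> set bs" "s \<in> set bs"
  shows "v \<in> set bs"
proof -
  define u where "u = as @ bs @ cs"
  have du: "distinct u" using assms(1) unfolding u_def .
  obtain k where k: "Suc k < length u" "u ! k = p" "u ! Suc k = v"
    using assms(2) unfolding u_def adjacent_pairs_iff_nth by blast
  obtain k' where k': "Suc k' < length u" "u ! k' = v" "u ! Suc k' = s"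
    using assms(3) unfolding u_def adjacent_pairs_iff_nth by blast
  obtain i j where ij: "i < length bs" "bs ! i = p" "j < length bs" "bs ! j = s"
    using assms(4,5) by (auto simp: in_set_conv_nth)
  have "u ! (length as + i) = p" "u ! (length as + j) = s"
    "length as + i < length u" "length as + j < length u"
    using ij unfolding u_def by (auto simp: nth_append)
  with k k' du have "k' = Suc k" "k = length as + i" "Suc k' = length as + j"
    using nth_eq_iff_index_eq[OF du] by (metis Suc_lessD)+
  then have "Suc i < length bs" "v = bs ! Suc i"
    using ij k unfolding u_def by (auto simp: nth_append)
  then show ?thesis by simp
qed

lemma distinct_concat_map:
  assumes "distinct xs" "\<forall>x\<in>set xs. distinct (f x)"
    "\<forall>x\<in>set xs. \<forall>y\<in>set xs. x \<noteq> y \<longrightarrow> set (f x) \<inter> set (f y) = {}"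
  shows "distinct (concat (map f xs))"
  using assms by (induction xs) auto

lemma concat_map_eq_imp_eq:
  assumes "\<forall>x\<in>set xs. \<forall>y\<in>set ys. hd (f x) = hd (f y) \<longrightarrow> x = y" "\<forall>x. f x \<noteq> []"
    and "concat (map f xs) = concat (map f ys)"
  shows "xs = ys"
  using assms
proof (induction xs arbitrary: ys)
  case Nil
  then show ?case by (cases ys) simp_all
next
  case (Cons x xs)
  obtain y ys' where ys: "ys = y # ys'" using Cons.prems(2,3) by (cases ys) auto
  with Cons.prems have eq: "f x @ concat (map f xs) = f y @ concat (map f ys')" by simp
  have "f x \<noteq> []" "f y \<noteq> []" using Cons.prems(2) by blast+
  with eq have "hd (f x) = hd (f y)" by (metis hd_append2)
  then have "x = y" using Cons.prems(1) ys by simp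
  with eq have "concat (map f xs) = concat (map f ys')" by simp
  moreover have "\<forall>x\<in>set xs. \<forall>y\<in>set ys'. hd (f x) = hd (f y) \<longrightarrow> x = y"
    using Cons.prems(1) ys by simp
  ultimately have "xs = ys'" using Cons.IH Cons.prems(2) by blast
  with ys \<open>x = y\<close> show ?case by simp
qed

lemma hd_concat_map: "xs \<noteq> [] \<Longrightarrow> f (hd xs) \<noteq> [] \<Longrightarrow> hd (concat (map f xs)) = hd (f (hd xs))"
  by (cases xs) auto

lemma last_concat_map:
  "xs \<noteq> [] \<Longrightarrow> f (last xs) \<noteq> [] \<Longrightarrow> last (concat (map f xs)) = last (f (last xs))"
  by (induction xs rule: rev_induct) auto

lemma take_drop_infix: "xs = take k xs @ take l (drop k xs) @ drop (k + l) xs"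
  by (metis append.assoc append_take_drop_id drop_drop add.commute)

lemma filter_eq_map_infix:
  assumes "filter P (as @ bs @ cs) = map g ws"
  obtains as' bs' cs' where "ws = as' @ bs' @ cs'" "map g bs' = filter P bs"
proof -
  have "map g ws = filter P as @ filter P bs @ filter P cs" using assms by simp
  then obtain us vs where "ws = us @ vs" "filter P bs @ filter P cs = map g vs"
    by (auto simp: map_eq_append_conv)
  moreover from this obtain vs1 vs2 where "vs = vs1 @ vs2" "filter P bs = map g vs1"
    by (metis map_eq_append_conv)
  ultimately show ?thesis using that by auto
qed

lemma strict_mono_on_preimage_interval:
  fixes g :: "nat \<Rightarrow> 'a::linorder"
  assumes "strict_mono_on {1..m} g"
  shows "\<exists>lo hi. {x \<in> {1..m}. a \<le> g x \<and> g x \<le> b} = {lo..hi}"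
proof (cases "{x \<in> {1..m}. a \<le> g x \<and> g x \<le> b} = {}")
  case True
  then show ?thesis by (intro exI[of _ 1] exI[of _ 0]) auto
next
  case False
  define S where "S = {x \<in> {1..m}. a \<le> g x \<and> g x \<le> b}"
  have fin: "finite S" and ne: "S \<noteq> {}" using False unfolding S_def by auto
  have mono: "g x \<le> g y" if "x \<in> {1..m}" "y \<in> {1..m}" "x \<le> y" for x y
    using strict_mono_onD[OF assms that(1,2)] that(3) by (cases "x = y") auto
  have "{Min S..Max S} \<subseteq> S"
  proof
    fix x assume x: "x \<in> {Min S..Max S}"
    have "Min S \<in> S" "Max S \<in> S" using fin ne by auto
    with x mono[of "Min S" x] mono[of x "Max S"] show "x \<in> S" unfolding S_def by auto
  qed
  moreover have "S \<subseteq> {Min S..Max S}" using fin by auto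
  ultimately show ?thesis unfolding S_def by blast
qed

section \<open>Permutations in one-line notation\<close>

text \<open>
  The four vincular patterns of length four say exactly that one adjacency of w lies strictly
  inside another one and runs in the same direction.
\<close>

definition nested :: "nat \<Rightarrow> nat \<Rightarrow> nat \<Rightarrow> nat \<Rightarrow> bool" where
  "nested a b c d \<longleftrightarrow> (a < c \<and> c < d \<and> d < b) \<or> (b < d \<and> d < c \<and> c < a)"

definition list_contains_nested :: "nat list \<Rightarrow> bool" where
  "list_contains_nested xs \<longleftrightarrow>
     (\<exists>a b c d. (a, b) \<in> adjacent_pairs xs \<and> (c, d) \<in> adjacent_pairs xs \<and> nested a b c d)"

definition list_contains_231 :: "nat list \<Rightarrow> bool" where
  "list_contains_231 xs \<longleftrightarrow> (\<exists>a b. (a, b) \<in> adjacent_pairs xs \<and> last xs < a \<and> a < b)"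

definition list_contains_132 :: "nat list \<Rightarrow> bool" where
  "list_contains_132 xs \<longleftrightarrow> (\<exists>a b. (a, b) \<in> adjacent_pairs xs \<and> hd xs < b \<and> b < a)"

definition has_interval_factor :: "nat list \<Rightarrow> bool" where
  "has_interval_factor xs \<longleftrightarrow> (\<exists>as bs cs. xs = as @ bs @ cs \<and> 2 \<le> length bs \<and>
     length bs < length xs \<and> (\<exists>a b. set bs = {a..b}))"

definition simple_A_list :: "nat list \<Rightarrow> bool" where
  "simple_A_list xs \<longleftrightarrow> \<not> list_contains_nested xs \<and> \<not> list_contains_231 xs \<and>
     \<not> list_contains_132 xs \<and> \<not> has_interval_factor xs"

definition simple_A_lists :: "nat \<Rightarrow> nat list set" where
  "simple_A_lists n = {xs. distinct xs \<and> set xs = {1..n} \<and> simple_A_list xs}"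

definition simple_A_set :: "nat \<Rightarrow> (nat \<Rightarrow> nat) set" where
  "simple_A_set n = {w \<in> A_set n. simple_perm n w}"

definition one_line :: "nat \<Rightarrow> (nat \<Rightarrow> nat) \<Rightarrow> nat list" where
  "one_line n w = map w [1..<Suc n]"

definition perm_of_list :: "nat list \<Rightarrow> nat \<Rightarrow> nat" where
  "perm_of_list xs k = (if 1 \<le> k \<and> k \<le> length xs then xs ! (k - 1) else k)"

lemma length_one_line [simp]: "length (one_line n w) = n"
  by (simp add: one_line_def)

lemma nth_one_line: "k < n \<Longrightarrow> one_line n w ! k = w (Suc k)"
  by (simp add: one_line_def nth_map_upt del: upt_Suc)

lemma hd_one_line: "1 \<le> n \<Longrightarrow> hd (one_line n w) = w 1"
  by (simp add: one_line_def upt_conv_Cons del: upt_Suc)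

lemma last_one_line: "1 \<le> n \<Longrightarrow> last (one_line n w) = w n"
  by (simp add: one_line_def)

lemma set_one_line_infix: "k + l \<le> n \<Longrightarrow> set (take l (drop k (one_line n w))) = w ` {Suc k..k + l}"
  by (simp add: one_line_def drop_map take_map atLeastLessThanSuc_atLeastAtMost del: upt_Suc)

lemma adjacent_pairs_one_line:
  "(a, b) \<in> adjacent_pairs (one_line n w) \<longleftrightarrow> (\<exists>i. 1 \<le> i \<and> i + 1 \<le> n \<and> w i = a \<and> w (i + 1) = b)"
proof -
  have "(a, b) \<in> adjacent_pairs (one_line n w) \<longleftrightarrow> (\<exists>k. Suc k < n \<and> w (Suc k) = a \<and> w (Suc (Suc k)) = b)"
    by (auto simp: adjacent_pairs_iff_nth nth_one_line)
  also have "\<dots> \<longleftrightarrow> (\<exists>i. 1 \<le> i \<and> i + 1 \<le> n \<and> w i = a \<and> w (i + 1) = b)"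
  proof
    assume "\<exists>k. Suc k < n \<and> w (Suc k) = a \<and> w (Suc (Suc k)) = b"
    then obtain k where "Suc k < n" "w (Suc k) = a" "w (Suc (Suc k)) = b" by blast
    then show "\<exists>i. 1 \<le> i \<and> i + 1 \<le> n \<and> w i = a \<and> w (i + 1) = b"
      by (intro exI[of _ "Suc k"]) simp
  next
    assume "\<exists>i. 1 \<le> i \<and> i + 1 \<le> n \<and> w i = a \<and> w (i + 1) = b"
    then obtain i where "1 \<le> i" "i + 1 \<le> n" "w i = a" "w (i + 1) = b" by blast
    then show "\<exists>k. Suc k < n \<and> w (Suc k) = a \<and> w (Suc (Suc k)) = b"
      by (intro exI[of _ "i - 1"]) simp
  qed
  finally show ?thesis .
qed

lemma list_contains_nested_one_line:
  "list_contains_nested (one_line n w) \<longleftrightarrow>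
     contains_3241 n w \<or> contains_1423 n w \<or> contains_4132 n w \<or> contains_2314 n w"
proof
  assume "list_contains_nested (one_line n w)"
  then obtain i j where ij: "1 \<le> i" "i + 1 \<le> n" "1 \<le> j" "j + 1 \<le> n"
    and nest: "nested (w i) (w (i + 1)) (w j) (w (j + 1))"
    unfolding list_contains_nested_def adjacent_pairs_one_line by blast
  have "\<not> (j = i \<or> j = i + 1 \<or> i = j + 1)"
    using nest unfolding nested_def by auto
  then have "i + 2 \<le> j \<or> j + 2 \<le> i" by linarith
  then show "contains_3241 n w \<or> contains_1423 n w \<or> contains_4132 n w \<or> contains_2314 n w"
  proof
    assume "i + 2 \<le> j"
    moreover have "j \<le> n - 1" using ij by linarith
    ultimately show ?thesis
      using ij(1) nest unfolding contains_1423_def contains_4132_def nested_def by blast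
  next
    assume "j + 2 \<le> i"
    moreover have "i \<le> n - 1" using ij by linarith
    ultimately show ?thesis
      using ij(3) nest unfolding contains_3241_def contains_2314_def nested_def by blast
  qed
next
  assume "contains_3241 n w \<or> contains_1423 n w \<or> contains_4132 n w \<or> contains_2314 n w"
  then obtain i j where ij: "1 \<le> i" "i + 2 \<le> j" "j \<le> n - 1"
    and "nested (w i) (w (i + 1)) (w j) (w (j + 1)) \<or> nested (w j) (w (j + 1)) (w i) (w (i + 1))"
    unfolding contains_3241_def contains_1423_def contains_4132_def contains_2314_def nested_def
    by blast
  moreover have "(w i, w (i + 1)) \<in> adjacent_pairs (one_line n w)"
    using ij unfolding adjacent_pairs_one_line by (intro exI[of _ i]) auto
  moreover have "(w j, w (j + 1)) \<in> adjacent_pairs (one_line n w)"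
    using ij unfolding adjacent_pairs_one_line by (intro exI[of _ j]) auto
  ultimately show "list_contains_nested (one_line n w)"
    unfolding list_contains_nested_def by blast
qed

lemma list_contains_231_one_line:
  assumes "1 \<le> n"
  shows "list_contains_231 (one_line n w) \<longleftrightarrow> contains_231 n w"
proof -
  have "list_contains_231 (one_line n w) \<longleftrightarrow>
      (\<exists>i. 1 \<le> i \<and> i + 1 \<le> n \<and> w n < w i \<and> w i < w (i + 1))"
    unfolding list_contains_231_def last_one_line[OF assms] adjacent_pairs_one_line by blast
  also have "\<dots> \<longleftrightarrow> (\<exists>i. 1 \<le> i \<and> i + 1 \<le> n - 1 \<and> w n < w i \<and> w i < w (i + 1))"
    by (intro ex_cong1) (auto simp: le_diff_conv order.order_iff_strict)
  finally show ?thesis unfolding contains_231_def .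
qed

lemma list_contains_132_one_line:
  assumes "1 \<le> n"
  shows "list_contains_132 (one_line n w) \<longleftrightarrow> contains_132 n w"
proof -
  have "list_contains_132 (one_line n w) \<longleftrightarrow>
      (\<exists>i. 1 \<le> i \<and> i + 1 \<le> n \<and> w 1 < w (i + 1) \<and> w (i + 1) < w i)"
    unfolding list_contains_132_def hd_one_line[OF assms] adjacent_pairs_one_line by blast
  also have "\<dots> \<longleftrightarrow> (\<exists>i. 2 \<le> i \<and> i \<le> n - 1 \<and> w 1 < w (i + 1) \<and> w (i + 1) < w i)"
    by (intro ex_cong1) (auto simp: le_diff_conv order.order_iff_strict)
  finally show ?thesis unfolding contains_132_def .
qed

lemma simple_perm_iff_no_interval_factor:
  "simple_perm n w \<longleftrightarrow> \<not> has_interval_factor (one_line n w)"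
proof -
  have "\<not> simple_perm n w" if "has_interval_factor (one_line n w)"
  proof -
    from that obtain as bs cs a b where split: "one_line n w = as @ bs @ cs"
      and len: "2 \<le> length bs" "length bs < n" and interval: "set bs = {a..b}"
      unfolding has_interval_factor_def by (metis length_one_line)
    define k l where "k = length as" and "l = length bs"
    have kl: "k + l \<le> n" using arg_cong[OF split, of length] unfolding k_def l_def by simp
    have "bs = take l (drop k (one_line n w))" using split unfolding k_def l_def by simp
    then have "w ` {Suc k..k + l} = {a..b}" using set_one_line_infix[OF kl] interval by simp
    with kl len show ?thesis
      unfolding simple_perm_def l_def by (intro notI, elim notE) (rule exI[of _ "Suc k"], rule exI[of _ "k + l"], auto simp: l_def)
  qed
  moreover have "has_interval_factor (one_line n w)" if "\<not> simple_perm n w"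
  proof -
    from that obtain i j a b where ij: "1 \<le> i" "j \<le> n" "2 \<le> j - i + 1" "j - i + 1 \<le> n - 1"
      and interval: "w ` {i..j} = {a..b}"
      unfolding simple_perm_def by blast
    define k l where "k = i - 1" and "l = j - i + 1"
    have kl: "k + l \<le> n" "k + l = j" "Suc k = i" using ij unfolding k_def l_def by auto
    have "set (take l (drop k (one_line n w))) = {a..b}"
      using set_one_line_infix[OF kl(1)] kl interval by simp
    moreover have "length (take l (drop k (one_line n w))) = l" using kl by simp
    ultimately show ?thesis
      unfolding has_interval_factor_def
    proof (intro exI conjI)
      show "one_line n w = take k (one_line n w) @ take l (drop k (one_line n w)) @ drop (k + l) (one_line n w)"
        by (rule take_drop_infix)
    qed (use ij in \<open>auto simp: l_def\<close>)
  qed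
  ultimately show ?thesis by blast
qed

lemma one_line_perm_of_list: "one_line (length xs) (perm_of_list xs) = xs"
  by (rule nth_equalityI) (auto simp: nth_one_line perm_of_list_def)

lemma perm_of_list_permutes:
  assumes "distinct xs" "set xs = {1..length xs}"
  shows "perm_of_list xs permutes {1..length xs}"
proof (rule bij_imp_permutes)
  have "perm_of_list xs ` {1..length xs} = set (one_line (length xs) (perm_of_list xs))"
    by (simp add: one_line_def atLeastLessThanSuc_atLeastAtMost del: upt_Suc)
  then have image: "perm_of_list xs ` {1..length xs} = {1..length xs}"
    using assms(2) by (simp add: one_line_perm_of_list)
  then show "bij_betw (perm_of_list xs) {1..length xs} {1..length xs}"
    by (simp add: bij_betw_def eq_card_imp_inj_on)
qed (auto simp: perm_of_list_def)

lemma distinct_one_line: "w permutes {1..n} \<Longrightarrow> distinct (one_line n w)"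
  by (auto simp: one_line_def distinct_map permutes_inj_on del: upt_Suc)

lemma set_one_line: "w permutes {1..n} \<Longrightarrow> set (one_line n w) = {1..n}"
  by (simp add: one_line_def atLeastLessThanSuc_atLeastAtMost permutes_image del: upt_Suc)

lemma one_line_inj_on: "inj_on (one_line n) {w. w permutes {1..n}}"
proof (rule inj_onI)
  fix w w' assume perms: "w \<in> {w. w permutes {1..n}}" "w' \<in> {w. w permutes {1..n}}"
    and eq: "one_line n w = one_line n w'"
  show "w = w'"
  proof
    fix x
    show "w x = w' x"
    proof (cases "x \<in> {1..n}")
      case True
      then have "x - 1 < n" "Suc (x - 1) = x" by auto
      then show ?thesis using eq nth_one_line by metis
    next
      case False
      moreover have "w permutes {1..n}" "w' permutes {1..n}" using perms by auto
      ultimately show ?thesis by (simp add: permutes_not_in)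
    qed
  qed
qed

lemma simple_A_set_iff:
  assumes "1 \<le> n" "w permutes {1..n}"
  shows "w \<in> simple_A_set n \<longleftrightarrow> simple_A_list (one_line n w)"
  using assms
  by (simp add: simple_A_set_def A_set_def simple_A_list_def list_contains_nested_one_line
      list_contains_231_one_line list_contains_132_one_line simple_perm_iff_no_interval_factor)

lemma bij_betw_one_line_simple_A:
  assumes "1 \<le> n"
  shows "bij_betw (one_line n) (simple_A_set n) (simple_A_lists n)"
proof (rule bij_betw_imageI)
  have perms: "simple_A_set n \<subseteq> {w. w permutes {1..n}}"
    by (auto simp: simple_A_set_def A_set_def)
  then show "inj_on (one_line n) (simple_A_set n)"
    using one_line_inj_on inj_on_subset by blast
  show "one_line n ` simple_A_set n = simple_A_lists n"
  proof
    show "one_line n ` simple_A_set n \<subseteq> simple_A_lists n"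
      using perms assms by (auto simp: simple_A_lists_def distinct_one_line set_one_line simple_A_set_iff)
  next
    show "simple_A_lists n \<subseteq> one_line n ` simple_A_set n"
    proof
      fix xs assume xs: "xs \<in> simple_A_lists n"
      then have len: "length xs = n" by (simp add: simple_A_lists_def distinct_card[symmetric])
      with xs have "perm_of_list xs permutes {1..n}"
        using perm_of_list_permutes[of xs] by (simp add: simple_A_lists_def)
      moreover have "one_line n (perm_of_list xs) = xs"
        using one_line_perm_of_list len by metis
      ultimately show "xs \<in> one_line n ` simple_A_set n"
        using xs assms by (intro image_eqI[of _ _ "perm_of_list xs"])
          (auto simp: simple_A_lists_def simple_A_set_iff)
    qed
  qed
qed

lemma finite_simple_A_lists: "finite (simple_A_lists n)"
  by (rule finite_subset[OF _ finite_subset_distinct[of "{1..n}"]]) (auto simp: simple_A_lists_def)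

lemma adjacent_pair_not_consecutive:
  assumes "\<not> has_interval_factor xs" "3 \<le> length xs" "(x, y) \<in> adjacent_pairs xs"
  shows "\<not> (y = x + 1 \<or> x = y + 1)"
proof
  assume consecutive: "y = x + 1 \<or> x = y + 1"
  obtain k where k: "Suc k < length xs" "xs ! k = x" "xs ! Suc k = y"
    using assms(3) unfolding adjacent_pairs_iff_nth by blast
  have "xs = take k xs @ drop k xs" by simp
  also have "drop k xs = [x, y] @ drop (k + 2) xs"
    using k by (metis Cons_nth_drop_Suc Suc_lessD add_2_eq_Suc' append_Cons append_Nil)
  finally have split: "xs = take k xs @ [x, y] @ drop (k + 2) xs" .
  have "set [x, y] = {min x y..max x y}"
    using consecutive by (auto simp: min_def max_def)
  then have "has_interval_factor xs"
    unfolding has_interval_factor_def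
  proof (intro exI conjI)
    show "xs = take k xs @ [x, y] @ drop (k + 2) xs" by (fact split)
  qed (use assms(2) in auto)
  with assms(1) show False by blast
qed

lemma interval_list_has_consecutive_pair:
  fixes bs :: "nat list"
  assumes "distinct bs" "set bs = {a..b}" "2 \<le> length bs" "length bs \<le> 3"
  obtains x y where "(x, y) \<in> adjacent_pairs bs" "y = x + 1 \<or> x = y + 1"
proof -
  have card: "Suc b - a = length bs" using assms(1,2) distinct_card by fastforce
  consider "length bs = 2" | "length bs = 3" using assms(3,4) by linarith
  then show ?thesis
  proof cases
    case 1
    then obtain x y where bs: "bs = [x, y]" by (auto simp: length_Suc_conv numeral_2_eq_2)
    with assms(1,2) have "x \<in> {a..b}" "y \<in> {a..b}" "x \<noteq> y" by auto
    with card 1 have "y = x + 1 \<or> x = y + 1" by auto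
    with bs that show ?thesis by simp
  next
    case 2
    then obtain x y z where bs: "bs = [x, y, z]" by (auto simp: length_Suc_conv numeral_3_eq_3)
    with assms(1,2) have "x \<in> {a..b}" "y \<in> {a..b}" "z \<in> {a..b}" "x \<noteq> y" "y \<noteq> z" "x \<noteq> z"
      by auto
    with card 2 have "(y = x + 1 \<or> x = y + 1) \<or> (z = y + 1 \<or> y = z + 1)" by auto
    with bs that show ?thesis by auto
  qed
qed

section \<open>Expanding the entries 1 and 2 by two blocks\<close>

definition expand :: "nat list \<Rightarrow> nat list \<Rightarrow> nat \<Rightarrow> nat list" where
  "expand L1 L2 x = (if x = 1 then L1 else if x = 2 then L2 else [x + 2])"

definition expand_list :: "nat list \<Rightarrow> nat list \<Rightarrow> nat list \<Rightarrow> nat list" where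
  "expand_list L1 L2 xs = concat (map (expand L1 L2) xs)"

definition apart :: "nat \<Rightarrow> nat \<Rightarrow> bool" where
  "apart x y \<longleftrightarrow> 1 \<le> x \<and> 1 \<le> y \<and> (x + 2 \<le> y \<or> y + 2 \<le> x)"

definition marked :: "nat \<Rightarrow> nat \<Rightarrow> nat \<Rightarrow> bool" where
  "marked t1 t2 v \<longleftrightarrow> v = t1 \<or> v = t2 \<or> 5 \<le> v"

text \<open>
  Exactly one value of each block is marked (t1 and t2); with the values \<ge> 5 the marked entries of
  the expansion form a copy of the original list under rep, so an interval factor of the
  expansion projects to one of the original. The other assumptions are finite checks on the
  blocks and on the junctions between the images of two non-consecutive values.
\<close>

locale expansion =
  fixes L1 L2 :: "nat list" and t1 t2 :: nat
  assumes blocks_nonempty: "L1 \<noteq> []" "L2 \<noteq> []"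
    and distinct_blocks: "distinct (L1 @ L2)"
    and set_blocks: "set L1 \<union> set L2 = {1..4}"
    and last_blocks_less: "last L1 < last L2"
    and hd_blocks_less: "hd L1 < hd L2"
    and junction_ascent_iff:
      "\<And>x y. apart x y \<Longrightarrow> last (expand L1 L2 x) < hd (expand L1 L2 y) \<longleftrightarrow> x < y"
    and inner_not_nested:
      "\<And>a b c d. (a, b) \<in> adjacent_pairs L1 \<union> adjacent_pairs L2 \<Longrightarrow>
         (c, d) \<in> adjacent_pairs L1 \<union> adjacent_pairs L2 \<Longrightarrow> \<not> nested a b c d"
    and inner_junction_not_nested:
      "\<And>a b x y. (a, b) \<in> adjacent_pairs L1 \<union> adjacent_pairs L2 \<Longrightarrow> apart x y \<Longrightarrow>
         \<not> nested a b (last (expand L1 L2 x)) (hd (expand L1 L2 y)) \<and>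
         \<not> nested (last (expand L1 L2 x)) (hd (expand L1 L2 y)) a b"
    and inner_no_231:
      "\<And>a b x. (a, b) \<in> adjacent_pairs L1 \<union> adjacent_pairs L2 \<Longrightarrow> 1 \<le> x \<Longrightarrow>
         \<not> (last (expand L1 L2 x) < a \<and> a < b)"
    and inner_no_132:
      "\<And>a b x. (a, b) \<in> adjacent_pairs L1 \<union> adjacent_pairs L2 \<Longrightarrow> 1 \<le> x \<Longrightarrow>
         \<not> (hd (expand L1 L2 x) < b \<and> b < a)"
    and inner_consecutive_marked:
      "\<And>a b. (a, b) \<in> adjacent_pairs L1 \<union> adjacent_pairs L2 \<Longrightarrow> b = a + 1 \<or> a = b + 1 \<Longrightarrow>
         marked t1 t2 a \<and> marked t1 t2 b"
    and junction_consecutive_marked: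
      "\<And>x y. apart x y \<Longrightarrow>
         hd (expand L1 L2 y) = last (expand L1 L2 x) + 1 \<or> last (expand L1 L2 x) = hd (expand L1 L2 y) + 1 \<Longrightarrow>
         marked t1 t2 (last (expand L1 L2 x)) \<and> marked t1 t2 (hd (expand L1 L2 y))"
    and marked_in_blocks: "filter (marked t1 t2) L1 = [t1]" "filter (marked t1 t2) L2 = [t2]"
    and markers_less: "t1 < t2"
    and first_marker: \<comment> \<open>makes an interval factor containing all marked values contain 1\<close>
      "t1 = 1 \<or> t1 = 2 \<and> (\<exists>p s. (p, 1) \<in> adjacent_pairs L1 \<union> adjacent_pairs L2 \<and>
         (1, s) \<in> adjacent_pairs L1 \<union> adjacent_pairs L2)"
begin

abbreviation inner_pairs :: "(nat \<times> nat) set" where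
  "inner_pairs \<equiv> adjacent_pairs L1 \<union> adjacent_pairs L2"

abbreviation exit_val :: "nat \<Rightarrow> nat" where
  "exit_val x \<equiv> last (expand L1 L2 x)"

abbreviation entry_val :: "nat \<Rightarrow> nat" where
  "entry_val x \<equiv> hd (expand L1 L2 x)"

definition rep :: "nat \<Rightarrow> nat" where
  "rep x = (if x = 1 then t1 else if x = 2 then t2 else x + 2)"

lemma expand_nonempty: "expand L1 L2 x \<noteq> []"
  using blocks_nonempty by (simp add: expand_def)

lemma block_values: "v \<in> set L1 \<Longrightarrow> 1 \<le> v \<and> v \<le> 4" "v \<in> set L2 \<Longrightarrow> 1 \<le> v \<and> v \<le> 4"
  using set_blocks by auto

lemma inner_pairs_small: "inner_pairs \<subseteq> {1..4} \<times> {1..4}"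
  by (auto dest!: adjacent_pairs_in_set block_values)

lemma markers_range: "1 \<le> t1" "t2 \<le> 4"
proof -
  have "t1 \<in> set L1" "t2 \<in> set L2"
    using marked_in_blocks by (metis filter_is_subset list.set_intros(1) subsetD)+
  then show "1 \<le> t1" "t2 \<le> 4" using block_values by auto
qed

lemma exit_less_iff: "1 \<le> x \<Longrightarrow> 1 \<le> y \<Longrightarrow> exit_val x < exit_val y \<longleftrightarrow> x < y"
  using last_blocks_less block_values(1)[of "last L1"] block_values(2)[of "last L2"] blocks_nonempty
  by (auto simp: expand_def)

lemma entry_less_iff: "1 \<le> x \<Longrightarrow> 1 \<le> y \<Longrightarrow> entry_val x < entry_val y \<longleftrightarrow> x < y"
  using hd_blocks_less block_values(1)[of "hd L1"] block_values(2)[of "hd L2"] blocks_nonempty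
  by (auto simp: expand_def)

lemma rep_strict_mono: "strict_mono_on {1..m} rep"
  using markers_less markers_range by (auto simp: strict_mono_on_def rep_def)

lemma marked_rep: "1 \<le> x \<Longrightarrow> marked t1 t2 (rep x)"
  by (auto simp: marked_def rep_def)

lemma filter_marked_expand: "1 \<le> x \<Longrightarrow> filter (marked t1 t2) (expand L1 L2 x) = [rep x]"
  using marked_in_blocks by (auto simp: expand_def rep_def marked_def)

lemma expand_disjoint:
  assumes "1 \<le> x" "1 \<le> y" "x \<noteq> y"
  shows "set (expand L1 L2 x) \<inter> set (expand L1 L2 y) = {}"
  using assms distinct_blocks by (auto simp: expand_def dest: block_values)

lemma junction_nested_imp_nested:
  assumes "apart x y" "apart x' y'"
    and "nested (exit_val x) (entry_val y) (exit_val x') (entry_val y')"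
  shows "nested x y x' y'"
proof -
  have "1 \<le> x" "1 \<le> y" "1 \<le> x'" "1 \<le> y'" "x' \<noteq> y'" using assms(1,2) by (auto simp: apart_def)
  with assms show ?thesis
    using junction_ascent_iff[OF assms(2)] exit_less_iff[of x x'] exit_less_iff[of x' x]
      entry_less_iff[of y y'] entry_less_iff[of y' y]
    unfolding nested_def by auto
qed

end

locale expansion_of_simple = expansion +
  fixes m :: nat and ws :: "nat list"
  assumes distinct_ws: "distinct ws" and set_ws: "set ws = {1..m}" and m_ge_3: "3 \<le> m"
    and simple_ws: "simple_A_list ws"
begin

abbreviation us :: "nat list" where
  "us \<equiv> expand_list L1 L2 ws"

lemma length_ws: "length ws = m"
  using distinct_card[OF distinct_ws] set_ws by simp

lemma adjacent_ws_apart: "(x, y) \<in> adjacent_pairs ws \<Longrightarrow> apart x y"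
  using adjacent_pair_not_consecutive[of ws x y] adjacent_pairs_in_set[of x y ws]
    adjacent_pairs_distinct_neq[OF distinct_ws, of x y] simple_ws set_ws length_ws m_ge_3
  by (auto simp: apart_def simple_A_list_def)

lemma set_us: "set us = {1..m + 2}"
proof
  show "set us \<subseteq> {1..m + 2}"
    using set_ws m_ge_3 by (auto simp: expand_list_def expand_def dest: block_values)
  show "{1..m + 2} \<subseteq> set us"
  proof
    fix v assume v: "v \<in> {1..m + 2}"
    have "1 \<in> set ws" "2 \<in> set ws" using set_ws m_ge_3 by auto
    show "v \<in> set us"
    proof (cases "v \<le> 4")
      case True
      then have "v \<in> set (expand L1 L2 1) \<union> set (expand L1 L2 2)"
        using set_blocks v by (auto simp: expand_def)
      with \<open>1 \<in> set ws\<close> \<open>2 \<in> set ws\<close> show ?thesis by (auto simp: expand_list_def)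
    next
      case False
      then have "v - 2 \<in> set ws" "expand L1 L2 (v - 2) = [v]"
        using v set_ws by (auto simp: expand_def)
      then show ?thesis by (force simp: expand_list_def)
    qed
  qed
qed

lemma distinct_us: "distinct us"
  unfolding expand_list_def
proof (rule distinct_concat_map)
  show "\<forall>x\<in>set ws. distinct (expand L1 L2 x)"
    using distinct_blocks by (simp add: expand_def)
  show "\<forall>x\<in>set ws. \<forall>y\<in>set ws. x \<noteq> y \<longrightarrow> set (expand L1 L2 x) \<inter> set (expand L1 L2 y) = {}"
    using set_ws expand_disjoint by auto
qed (fact distinct_ws)

lemma length_us: "length us = m + 2"
  using distinct_card[OF distinct_us] set_us by simp

lemma adjacent_pairs_us:
  "adjacent_pairs us = inner_pairs \<union> {(exit_val x, entry_val y) | x y. (x, y) \<in> adjacent_pairs ws}"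
proof -
  have "1 \<in> set ws" "2 \<in> set ws" using set_ws m_ge_3 by auto
  then have "(\<Union>x\<in>set ws. adjacent_pairs (expand L1 L2 x)) = inner_pairs"
    by (auto simp: expand_def split: if_splits)
  then show ?thesis
    unfolding expand_list_def using adjacent_pairs_concat_map[of ws "expand L1 L2"] expand_nonempty
    by auto
qed

lemma adjacent_pairs_usE:
  assumes "(a, b) \<in> adjacent_pairs us"
  obtains "(a, b) \<in> inner_pairs"
    | x y where "(x, y) \<in> adjacent_pairs ws" "apart x y" "a = exit_val x" "b = entry_val y"
  using assms adjacent_ws_apart unfolding adjacent_pairs_us by blast

lemma filter_marked_us: "filter (marked t1 t2) us = map rep ws"
proof -
  have "\<forall>x\<in>set ws. 1 \<le> x" using set_ws by auto
  then show ?thesis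
    unfolding expand_list_def by (induction ws) (simp_all add: filter_marked_expand)
qed

lemma us_not_nested: "\<not> list_contains_nested us"
proof
  assume "list_contains_nested us"
  then obtain a b c d where ab: "(a, b) \<in> adjacent_pairs us" and cd: "(c, d) \<in> adjacent_pairs us"
    and nest: "nested a b c d"
    unfolding list_contains_nested_def by blast
  from ab show False
  proof (cases rule: adjacent_pairs_usE)
    case 1
    from cd show False
      by (cases rule: adjacent_pairs_usE) (use 1 nest inner_not_nested inner_junction_not_nested in blast)+
  next
    case (2 x y)
    from cd show False
    proof (cases rule: adjacent_pairs_usE)
      case 1
      then show False using 2 nest inner_junction_not_nested by blast
    next
      case (2 x' y')
      then have "nested x y x' y'"
        using \<open>apart x y\<close> \<open>a = exit_val x\<close> \<open>b = entry_val y\<close> nest junction_nested_imp_nested by blast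
      then show False
        using simple_ws \<open>(x, y) \<in> adjacent_pairs ws\<close> 2 unfolding simple_A_list_def list_contains_nested_def by blast
    qed
  qed
qed

lemma us_no_231: "\<not> list_contains_231 us"
proof
  assume "list_contains_231 us"
  then obtain a b where ab: "(a, b) \<in> adjacent_pairs us" and above: "last us < a" "a < b"
    unfolding list_contains_231_def by blast
  have ws_nonempty: "ws \<noteq> []" using set_ws m_ge_3 by auto
  then have last_us: "last us = exit_val (last ws)" and "1 \<le> last ws"
    using last_in_set[OF ws_nonempty] set_ws last_concat_map[OF ws_nonempty] expand_nonempty
    by (auto simp: expand_list_def)
  from ab show False
  proof (cases rule: adjacent_pairs_usE)
    case 1
    then show False using inner_no_231[OF 1 \<open>1 \<le> last ws\<close>] above last_us by simp
  next
    case (2 x y)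
    then have "last ws < x" "x < y"
      using exit_less_iff[of "last ws" x] junction_ascent_iff[of x y] \<open>1 \<le> last ws\<close> above last_us
      by (auto simp: apart_def)
    then show False
      using simple_ws 2 unfolding simple_A_list_def list_contains_231_def by blast
  qed
qed

lemma us_no_132: "\<not> list_contains_132 us"
proof
  assume "list_contains_132 us"
  then obtain a b where ab: "(a, b) \<in> adjacent_pairs us" and below: "hd us < b" "b < a"
    unfolding list_contains_132_def by blast
  have ws_nonempty: "ws \<noteq> []" using set_ws m_ge_3 by auto
  then have hd_us: "hd us = entry_val (hd ws)" and "1 \<le> hd ws"
    using hd_in_set[OF ws_nonempty] set_ws hd_concat_map[OF ws_nonempty] expand_nonempty
    by (auto simp: expand_list_def)
  from ab show False
  proof (cases rule: adjacent_pairs_usE)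
    case 1
    then show False using inner_no_132[OF 1 \<open>1 \<le> hd ws\<close>] below hd_us by simp
  next
    case (2 x y)
    then have "hd ws < y" "y < x"
      using entry_less_iff[of "hd ws" y] junction_ascent_iff[of x y] \<open>1 \<le> hd ws\<close> below hd_us
      by (auto simp: apart_def)
    then show False
      using simple_ws 2 unfolding simple_A_list_def list_contains_132_def by blast
  qed
qed

lemma consecutive_adjacent_marked:
  assumes "(a, b) \<in> adjacent_pairs us" "b = a + 1 \<or> a = b + 1"
  shows "marked t1 t2 a \<and> marked t1 t2 b"
  using assms(1)
proof (cases rule: adjacent_pairs_usE)
  case 1
  then show ?thesis using inner_consecutive_marked assms(2) by blast
next
  case (2 x y)
  then show ?thesis using junction_consecutive_marked[of x y] assms(2) by auto
qed

lemma interval_infix_projection: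
  assumes "us = as @ bs @ cs" "set bs = {a..b}"
  obtains as' bs' cs' where "ws = as' @ bs' @ cs'" "map rep bs' = filter (marked t1 t2) bs"
    "\<exists>lo hi. set bs' = {lo..hi}"
proof -
  have "filter (marked t1 t2) (as @ bs @ cs) = map rep ws"
    using filter_marked_us assms(1) by simp
  then obtain as' bs' cs' where split: "ws = as' @ bs' @ cs'"
    and proj: "map rep bs' = filter (marked t1 t2) bs"
    by (rule filter_eq_map_infix)
  have "set bs' = {x \<in> {1..m}. a \<le> rep x \<and> rep x \<le> b}"
  proof
    show "set bs' \<subseteq> {x \<in> {1..m}. a \<le> rep x \<and> rep x \<le> b}"
    proof
      fix x assume x: "x \<in> set bs'"
      then have "rep x \<in> set (filter (marked t1 t2) bs)" by (metis image_eqI list.set_map proj)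
      moreover have "x \<in> {1..m}" using x split set_ws by auto
      ultimately show "x \<in> {x \<in> {1..m}. a \<le> rep x \<and> rep x \<le> b}" using assms(2) by auto
    qed
  next
    show "{x \<in> {1..m}. a \<le> rep x \<and> rep x \<le> b} \<subseteq> set bs'"
    proof
      fix x assume x: "x \<in> {x \<in> {1..m}. a \<le> rep x \<and> rep x \<le> b}"
      then have "rep x \<in> set (filter (marked t1 t2) bs)" using assms(2) marked_rep by auto
      then obtain x' where x': "x' \<in> set bs'" "rep x' = rep x" by (metis imageE list.set_map proj)
      moreover have "x' \<in> {1..m}" using x' split set_ws by auto
      ultimately have "x' = x"
        using x inj_onD[OF strict_mono_on_imp_inj_on[OF rep_strict_mono[of m]]] by auto
      with x' show "x \<in> set bs'" by simp
    qed
  qed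
  then have "\<exists>lo hi. set bs' = {lo..hi}"
    using strict_mono_on_preimage_interval[OF rep_strict_mono] by simp
  with split proj that show ?thesis by blast
qed

lemma interval_infix_two_marked:
  assumes split: "us = as @ bs @ cs" and interval: "set bs = {a..b}" and len: "2 \<le> length bs"
  shows "2 \<le> length (filter (marked t1 t2) bs)"
proof (rule ccontr)
  assume few: "\<not> ?thesis"
  have distinct_bs: "distinct bs" using distinct_us split by simp
  have "set bs \<subseteq> {1..m + 2}" using set_us split by auto
  then have "set (filter (\<lambda>v. \<not> marked t1 t2 v) bs) \<subseteq> {1..4} - {t1, t2}"
    by (auto simp: marked_def)
  moreover have "card ({1..4} - {t1, t2}) = 2"
    using markers_less markers_range by (simp add: card_Diff_subset)
  ultimately have "card (set (filter (\<lambda>v. \<not> marked t1 t2 v) bs)) \<le> 2"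
    by (metis card_mono finite_Diff finite_atLeastAtMost)
  then have "length (filter (\<lambda>v. \<not> marked t1 t2 v) bs) \<le> 2"
    using distinct_card[of "filter (\<lambda>v. \<not> marked t1 t2 v) bs"] distinct_bs by simp
  then have "length bs \<le> 3"
    using few sum_length_filter_compl[of "marked t1 t2" bs] by linarith
  then obtain x y where xy: "(x, y) \<in> adjacent_pairs bs" "y = x + 1 \<or> x = y + 1"
    by (rule interval_list_has_consecutive_pair[OF distinct_bs interval len])
  then have "(x, y) \<in> adjacent_pairs us"
    using adjacent_pairs_infix[of bs as cs] unfolding split by blast
  then have "marked t1 t2 x \<and> marked t1 t2 y"
    by (rule consecutive_adjacent_marked) (fact xy(2))
  moreover have "x \<in> set bs" "y \<in> set bs" "x \<noteq> y"
    using adjacent_pairs_in_set[OF xy(1)] xy(2) by auto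
  ultimately have "{x, y} \<subseteq> set (filter (marked t1 t2) bs)" by auto
  from card_mono[OF finite_set this] \<open>x \<noteq> y\<close>
  have "2 \<le> card (set (filter (marked t1 t2) bs))" by simp
  also have "\<dots> \<le> length (filter (marked t1 t2) bs)" by (rule card_length)
  finally show False using few by simp
qed

lemma interval_infix_contains_1:
  assumes split: "us = as @ bs @ cs" and upper: "{t1..m + 2} \<subseteq> set bs"
  shows "1 \<in> set bs"
  using first_marker
proof
  assume "t1 = 1"
  then show ?thesis using upper by auto
next
  assume "t1 = 2 \<and> (\<exists>p s. (p, 1) \<in> inner_pairs \<and> (1, s) \<in> inner_pairs)"
  then obtain p s where "t1 = 2" and inner: "(p, 1) \<in> inner_pairs" "(1, s) \<in> inner_pairs"
    by blast
  then have adj: "(p, 1) \<in> adjacent_pairs us" "(1, s) \<in> adjacent_pairs us"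
    unfolding adjacent_pairs_us by simp_all
  then have "p \<in> set us" "s \<in> set us" "p \<noteq> 1" "s \<noteq> 1"
    using adjacent_pairs_in_set[OF adj(1)] adjacent_pairs_in_set[OF adj(2)]
      adjacent_pairs_distinct_neq[OF distinct_us adj(1)] adjacent_pairs_distinct_neq[OF distinct_us adj(2)]
    by simp_all
  then have "p \<in> {2..m + 2}" "s \<in> {2..m + 2}" unfolding set_us by auto
  with upper \<open>t1 = 2\<close> have "p \<in> set bs" "s \<in> set bs" by auto
  moreover have "distinct (as @ bs @ cs)" using distinct_us unfolding split .
  ultimately show ?thesis
    using adj unfolding split by (intro adjacent_pairs_middle_in_infix[of as bs cs p 1 s])
qed

lemma interval_infix_all_marked:
  assumes split: "us = as @ bs @ cs" and interval: "set bs = {a..b}"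
    and ends: "t1 \<in> set bs" "m + 2 \<in> set bs"
  shows "set bs = {1..m + 2}"
proof -
  have upper: "{t1..m + 2} \<subseteq> set bs" using interval ends by auto
  have "1 \<in> set bs" using split upper by (rule interval_infix_contains_1)
  have "t1 \<le> 2" using first_marker by auto
  have "{1..m + 2} \<subseteq> set bs"
  proof
    fix v assume v: "v \<in> {1..m + 2}"
    show "v \<in> set bs"
    proof (cases "v = 1")
      case True
      with \<open>1 \<in> set bs\<close> show ?thesis by simp
    next
      case False
      with v \<open>t1 \<le> 2\<close> have "v \<in> {t1..m + 2}" by auto
      with upper show ?thesis by blast
    qed
  qed
  moreover have "set bs \<subseteq> {1..m + 2}" using set_us unfolding split by auto
  ultimately show ?thesis by blast
qed

lemma us_no_interval_factor: "\<not> has_interval_factor us"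
proof
  assume "has_interval_factor us"
  then obtain as bs cs a b where split: "us = as @ bs @ cs" and interval: "set bs = {a..b}"
    and len: "2 \<le> length bs" "length bs < length us"
    unfolding has_interval_factor_def by blast
  obtain as' bs' cs' where split': "ws = as' @ bs' @ cs'"
    and proj: "map rep bs' = filter (marked t1 t2) bs" and interval': "\<exists>lo hi. set bs' = {lo..hi}"
    by (rule interval_infix_projection[OF split interval])
  have "2 \<le> length bs'"
    using interval_infix_two_marked[OF split interval len(1)] arg_cong[OF proj, of length] by simp
  moreover have "length bs' \<le> m" using split' length_ws by auto
  moreover have "\<not> (2 \<le> length bs' \<and> length bs' < m)"
    using simple_ws split' interval' length_ws unfolding simple_A_list_def has_interval_factor_def by blast
  ultimately have "length bs' = m" by linarith
  then have "bs' = ws" using split' length_ws by simp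
  then have "rep ` set ws \<subseteq> set bs"
    using proj by (metis filter_is_subset list.set_map)
  then have "rep 1 \<in> set bs" "rep m \<in> set bs"
    using set_ws m_ge_3 by auto
  then have "set bs = {1..m + 2}"
    using interval_infix_all_marked[OF split interval] m_ge_3 by (simp add: rep_def)
  moreover have "distinct bs" using distinct_us unfolding split by simp
  ultimately have "length bs = m + 2" using distinct_card by fastforce
  with len(2) length_us show False by simp
qed

lemma us_simple_A: "us \<in> simple_A_lists (m + 2)"
  using distinct_us set_us us_not_nested us_no_231 us_no_132 us_no_interval_factor
  by (simp add: simple_A_lists_def simple_A_list_def)

lemma small_adjacent_pairs_us: "adjacent_pairs us \<inter> {1..4} \<times> {1..4} = inner_pairs"
proof
  show "adjacent_pairs us \<inter> {1..4} \<times> {1..4} \<subseteq> inner_pairs"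
  proof (rule subrelI)
    fix a b assume "(a, b) \<in> adjacent_pairs us \<inter> {1..4} \<times> {1..4}"
    then have ab: "(a, b) \<in> adjacent_pairs us" and small: "a \<le> 4" "b \<le> 4" by auto
    from ab show "(a, b) \<in> inner_pairs"
    proof (cases rule: adjacent_pairs_usE)
      case (2 x y)
      have "x \<le> 2"
      proof (rule ccontr)
        assume "\<not> x \<le> 2"
        then have "exit_val x = x + 2" by (simp add: expand_def)
        with 2 small \<open>\<not> x \<le> 2\<close> show False by linarith
      qed
      moreover have "y \<le> 2"
      proof (rule ccontr)
        assume "\<not> y \<le> 2"
        then have "entry_val y = y + 2" by (simp add: expand_def)
        with 2 small \<open>\<not> y \<le> 2\<close> show False by linarith
      qed
      ultimately show ?thesis using \<open>apart x y\<close> by (auto simp: apart_def)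
    qed
  qed
  have "inner_pairs \<subseteq> adjacent_pairs us" unfolding adjacent_pairs_us by blast
  with inner_pairs_small show "inner_pairs \<subseteq> adjacent_pairs us \<inter> {1..4} \<times> {1..4}" by blast
qed

end

context expansion
begin

lemma expand_list_simple_A:
  assumes "ws \<in> simple_A_lists m" "3 \<le> m"
  shows "expand_list L1 L2 ws \<in> simple_A_lists (m + 2)"
    and "adjacent_pairs (expand_list L1 L2 ws) \<inter> {1..4} \<times> {1..4} = inner_pairs"
proof -
  interpret expansion_of_simple L1 L2 t1 t2 m ws
    using assms by unfold_locales (simp_all add: simple_A_lists_def)
  show "expand_list L1 L2 ws \<in> simple_A_lists (m + 2)" by (rule us_simple_A)
  show "adjacent_pairs (expand_list L1 L2 ws) \<inter> {1..4} \<times> {1..4} = inner_pairs"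
    by (rule small_adjacent_pairs_us)
qed

lemma inj_on_expand_list: "inj_on (expand_list L1 L2) (simple_A_lists m)"
proof (rule inj_onI)
  fix ws ws' assume ws: "ws \<in> simple_A_lists m" "ws' \<in> simple_A_lists m"
    and eq: "expand_list L1 L2 ws = expand_list L1 L2 ws'"
  have "\<forall>x\<in>set ws. \<forall>y\<in>set ws'. entry_val x = entry_val y \<longrightarrow> x = y"
  proof (intro ballI impI)
    fix x y assume "x \<in> set ws" "y \<in> set ws'" "entry_val x = entry_val y"
    moreover have "1 \<le> x" "1 \<le> y" using \<open>x \<in> set ws\<close> \<open>y \<in> set ws'\<close> ws
      by (auto simp: simple_A_lists_def)
    ultimately show "x = y"
      using entry_less_iff[of x y] entry_less_iff[of y x] by (metis less_irrefl linorder_neqE_nat)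
  qed
  moreover have "\<forall>x. expand L1 L2 x \<noteq> []" using expand_nonempty by blast
  ultimately show "ws = ws'"
    using eq unfolding expand_list_def by (rule concat_map_eq_imp_eq)
qed

end

lemma expansion_13_24: "expansion [1, 3] [2, 4] 1 2"
  by unfold_locales (auto simp: expand_def apart_def nested_def marked_def)

lemma expansion_31_42: "expansion [3, 1] [4, 2] 1 2"
  by unfold_locales (auto simp: expand_def apart_def nested_def marked_def)

lemma expansion_2_314: "expansion [2] [3, 1, 4] 2 4"
  by unfold_locales (auto simp: expand_def apart_def nested_def marked_def)

lemma expansion_2_413: "expansion [2] [4, 1, 3] 2 3"
  by unfold_locales (auto simp: expand_def apart_def nested_def marked_def)

section \<open>Counting\<close>

definition block_pairs :: "(nat list \<times> nat list) set" where
  "block_pairs = {([1, 3], [2, 4]), ([3, 1], [4, 2]), ([2], [3, 1, 4]), ([2], [4, 1, 3])}"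

lemma block_pairs_expansion: "(L1, L2) \<in> block_pairs \<Longrightarrow> \<exists>t1 t2. expansion L1 L2 t1 t2"
  using expansion_13_24 expansion_31_42 expansion_2_314 expansion_2_413
  unfolding block_pairs_def by blast

lemma card_block_pairs: "card block_pairs = 4"
  by (simp add: block_pairs_def)

lemma block_pairs_distinct_inner_pairs:
  "(L1, L2) \<in> block_pairs \<Longrightarrow> (L1', L2') \<in> block_pairs \<Longrightarrow> (L1, L2) \<noteq> (L1', L2') \<Longrightarrow>
     adjacent_pairs L1 \<union> adjacent_pairs L2 \<noteq> adjacent_pairs L1' \<union> adjacent_pairs L2'"
  by (auto simp: block_pairs_def doubleton_eq_iff)

lemma expansion_images_disjoint:
  assumes "expansion L1 L2 t1 t2" "expansion L1' L2' t1' t2'" "3 \<le> m"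
    and "adjacent_pairs L1 \<union> adjacent_pairs L2 \<noteq> adjacent_pairs L1' \<union> adjacent_pairs L2'"
  shows "expand_list L1 L2 ` simple_A_lists m \<inter> expand_list L1' L2' ` simple_A_lists m = {}"
  using expansion.expand_list_simple_A(2)[OF assms(1) _ assms(3)]
    expansion.expand_list_simple_A(2)[OF assms(2) _ assms(3)] assms(4)
  by force

lemma four_card_simple_A_lists_le:
  assumes "3 \<le> m"
  shows "4 * card (simple_A_lists m) \<le> card (simple_A_lists (m + 2))"
proof -
  define expansions where "expansions p = expand_list (fst p) (snd p) ` simple_A_lists m" for p
  have card_expansions: "card (expansions p) = card (simple_A_lists m)" if "p \<in> block_pairs" for p
    using that block_pairs_expansion[of "fst p" "snd p"]
    by (auto simp: expansions_def intro: card_image expansion.inj_on_expand_list)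
  have "card (\<Union>(expansions ` block_pairs)) = (\<Sum>p\<in>block_pairs. card (expansions p))"
  proof (rule card_UN_disjoint)
    show "\<forall>p\<in>block_pairs. \<forall>q\<in>block_pairs. p \<noteq> q \<longrightarrow> expansions p \<inter> expansions q = {}"
    proof (intro ballI impI)
      fix p q assume "p \<in> block_pairs" "q \<in> block_pairs" "p \<noteq> q"
      with block_pairs_expansion[of "fst p" "snd p"] block_pairs_expansion[of "fst q" "snd q"]
        block_pairs_distinct_inner_pairs[of "fst p" "snd p" "fst q" "snd q"] assms
      show "expansions p \<inter> expansions q = {}"
        unfolding expansions_def by (metis expansion_images_disjoint prod.collapse)
    qed
  qed (simp_all add: block_pairs_def expansions_def finite_simple_A_lists)
  also have "\<dots> = 4 * card (simple_A_lists m)"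
    using card_expansions card_block_pairs by simp
  finally have "4 * card (simple_A_lists m) = card (\<Union>(expansions ` block_pairs))" ..
  also have "\<dots> \<le> card (simple_A_lists (m + 2))"
  proof (rule card_mono[OF finite_simple_A_lists])
    show "\<Union>(expansions ` block_pairs) \<subseteq> simple_A_lists (m + 2)"
      using block_pairs_expansion expansion.expand_list_simple_A(1) assms
      by (fastforce simp: expansions_def)
  qed
  finally show ?thesis .
qed

theorem mainTheorem17:
  fixes n :: nat
  assumes "n \<ge> 5"
  shows "s_seq n \<ge> 4 * s_seq (n - 2)"
proof -
  have s_seq_eq: "s_seq k = card (simple_A_lists k)" if "1 \<le> k" for k
    using bij_betw_same_card[OF bij_betw_one_line_simple_A[OF that]]
    by (simp add: s_seq_def simple_A_set_def)
  define m where "m = n - 2"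
  have n: "n = m + 2" and "3 \<le> m" "1 \<le> m" "1 \<le> n" using assms unfolding m_def by simp_all
  show ?thesis
    using four_card_simple_A_lists_le[OF \<open>3 \<le> m\<close>] s_seq_eq[OF \<open>1 \<le> n\<close>] s_seq_eq[OF \<open>1 \<le> m\<close>] n
    by simp
qed

end
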